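(* Let $H(s)=\boldsymbol b^T(s\boldsymbol I-\boldsymbol A)^{-1}\boldsymbol b$ be a minimal SSS system of order $n$ with $\boldsymbol A$ symmetric negative definite, and let $r<n$. Suppose $\boldsymbol s^*$ is a fixed point of the IRKA map $\lambda$, and let $H_r$ be the associated reduced model (which is SSS, obtained as $\boldsymbol A_r=\boldsymbol Q_r^T\boldsymbol A\boldsymbol Q_r$, $\boldsymbol b_r=\boldsymbol c_r=\boldsymbol Q_r^T\boldsymbol b$ with $\boldsymbol Q_r$ an orthonormal basis of the range of $\boldsymbol V_r$), with distinct poles $\tilde\lambda_1,\dots,\tilde\lambda_r$ (so $s_i^*=-\tilde\lambda_i$ and $H_r$ is a Hermite interpolant of $H$ at $-\tilde\lambda_1,\dots,-\tilde\lambda_r$). Then the diagonal matrix $\boldsymbol E=\mathrm{diag}\big(H''(-\tilde\lambda_1)-H_r''(-\tilde\lambda_1),\dots,H''(-\tilde\lambda_r)-H_r''(-\tilde\lambda_r)\big)$ is positive definite.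
   Context: SSS: $\boldsymbol A=\boldsymbol A^T$, $\boldsymbol c=\boldsymbol b$. IRKA map: for distinct $s_1,\dots,s_r$ not eigenvalues of $\boldsymbol A$, set $\boldsymbol V_r=[(s_1\boldsymbol I-\boldsymbol A)^{-1}\boldsymbol b,\dots,(s_r\boldsymbol I-\boldsymbol A)^{-1}\boldsymbol b]$, $\boldsymbol W_r=\boldsymbol V_r$ (SSS case), $\boldsymbol A_r=(\boldsymbol W_r^T\boldsymbol V_r)^{-1}\boldsymbol W_r^T\boldsymbol A\boldsymbol V_r$, and $\lambda(\boldsymbol s)=-(\text{eigenvalues of }\boldsymbol A_r)$; a fixed point satisfies $\lambda(\boldsymbol s)=\boldsymbol s$. By construction, the reduced model satisfies $H(s_i)=H_r(s_i)$ and $H'(s_i)=H_r'(s_i)$. *)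

theory Defs
  imports "HOL-Analysis.Analysis"
begin

definition is_eigenvalue :: "real^'n^'n \<Rightarrow> real \<Rightarrow> bool" where
  "is_eigenvalue M mu \<longleftrightarrow> (\<exists>v. v \<noteq> 0 \<and> M *v v = mu *\<^sub>R v)"

definition transfer :: "real^'n^'n \<Rightarrow> real^'n \<Rightarrow> real^'n \<Rightarrow> real \<Rightarrow> real" where
  "transfer A b c s = c \<bullet> (matrix_inv (s *\<^sub>R mat 1 - A) *v b)"

definition krylov :: "real^'n^'n \<Rightarrow> real^'n \<Rightarrow> nat \<Rightarrow> real^'n" where
  "krylov A b k = (((*v) A) ^^ k) b"

text \<open>Minimality of the SSS system (A, b, c = b): controllable and observable,
  i.e. span{b, Ab, ..., A^(n-1) b} = R^n and span{c, A^T c, ...} = R^n.\<close>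
definition minimal_sss :: "real^'n^'n \<Rightarrow> real^'n \<Rightarrow> bool" where
  "minimal_sss A b \<longleftrightarrow>
     span {krylov A b k | k. k < CARD('n)} = UNIV \<and>
     span {krylov (transpose A) b k | k. k < CARD('n)} = UNIV"

definition irka_V :: "real^'n^'n \<Rightarrow> real^'n \<Rightarrow> real^'r \<Rightarrow> real^'r^'n" where
  "irka_V A b s = (\<chi> i j. (matrix_inv (s$j *\<^sub>R mat 1 - A) *v b) $ i)"

definition irka_Ar :: "real^'n^'n \<Rightarrow> real^'n \<Rightarrow> real^'r \<Rightarrow> real^'r^'r" where
  "irka_Ar A b s = (let V = irka_V A b s in
      matrix_inv (transpose V ** V) ** (transpose V ** A ** V))"

definition pos_def :: "real^'r^'r \<Rightarrow> bool" where
  "pos_def E \<longleftrightarrow> (\<forall>x. x \<noteq> 0 \<longrightarrow> x \<bullet> (E *v x) > 0)"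

definition diag_mat :: "real^'r \<Rightarrow> real^'r^'r" where
  "diag_mat d = (\<chi> i j. if i = j then d$i else 0)"

end

theory Submission
  imports Defs "HOL-Computational_Algebra.Polynomial"
begin

(* Write R(t) = (tI - A)^{-1}.  For symmetric negative definite A and t > 0 the
   transfer function H(t) = b.R(t)b has H''(t) = 2 u.z with u = R(t)b, z = R(t)u.
   For the compressed model A_r = Q^T A Q (Q orthonormal) the same holds with
   y = R_r(t)Q^T b, w = R_r(t)y.  If u lies in range Q (interpolation), then u = Qy,
   and with d = Qw - z one gets the Galerkin identity  u.z - y.w = d.(tI - A)d,
   which is positive unless d = 0, i.e. unless z lies in range Q. *)

lemma inner_matrix_transpose: "x \<bullet> (M *v y) = (transpose M *v x) \<bullet> y"
  for M :: "real^'m^'k"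
  by (simp add: dot_lmul_matrix)

lemma shift_mult_vec: "(s *\<^sub>R mat 1 - M) *v z = s *\<^sub>R z - M *v z"
  for M :: "real^'m^'m"
  by (metis matrix_vector_mult_diff_rdistrib scaleR_matrix_vector_assoc matrix_vector_mul_lid)

lemma mult_vec_sum: "A *v (\<Sum>k\<in>S. f k) = (\<Sum>k\<in>S. A *v f k)" for A :: "real^'n^'m"
  by (induct S rule: infinite_finite_induct) (auto simp: matrix_vector_right_distrib)

lemma mult_vec_uminus: "A *v (- v) = - (A *v v)" for A :: "real^'n^'m"
  by (metis matrix_vector_mult_scaleR scaleR_minus1_left)

lemma matrix_inv_right:
  fixes M :: "real^'m^'m"
  assumes "\<And>z. M *v z = 0 \<Longrightarrow> z = 0"
  shows "M *v (matrix_inv M *v y) = y"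
proof -
  have "invertible M" using assms matrix_left_invertible_ker invertible_left_inverse by blast
  then have "M ** matrix_inv M = mat 1 \<and> matrix_inv M ** M = mat 1"
    unfolding invertible_def matrix_inv_def by (rule someI_ex)
  then show ?thesis by (simp add: matrix_vector_mul_assoc)
qed

definition res :: "real^'m^'m \<Rightarrow> real \<Rightarrow> real^'m \<Rightarrow> real^'m" where
  "res M s y = matrix_inv (s *\<^sub>R mat 1 - M) *v y"

lemma transfer_res: "transfer A b c = (\<lambda>t. c \<bullet> res A t b)"
  by (simp add: fun_eq_iff transfer_def res_def)

lemma res_solves:
  assumes "\<not> is_eigenvalue M s"
  shows "(s *\<^sub>R mat 1 - M) *v res M s y = y"
  unfolding res_def
proof (rule matrix_inv_right)
  fix z assume "(s *\<^sub>R mat 1 - M) *v z = 0"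
  then have "M *v z = s *\<^sub>R z" by (simp add: shift_mult_vec)
  then show "z = 0" using assms unfolding is_eigenvalue_def by blast
qed

section \<open>Resolvents of symmetric negative definite matrices\<close>

locale neg_def_sym =
  fixes M :: "real^'m^'m"
  assumes sym: "transpose M = M"
    and neg: "\<forall>x. x \<noteq> 0 \<longrightarrow> x \<bullet> (M *v x) < 0"
begin

lemma shift_coercive: "0 < s \<Longrightarrow> s * (z \<bullet> z) \<le> z \<bullet> ((s *\<^sub>R mat 1 - M) *v z)"
  using neg[rule_format, of z]
  by (cases "z = 0") (auto simp: shift_mult_vec inner_diff_right)

lemma not_eigenvalue_pos: "0 < s \<Longrightarrow> \<not> is_eigenvalue M s"
  unfolding is_eigenvalue_def
  using shift_coercive[of s] by (metis diff_self inner_gt_zero_iff inner_zero_right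
      mult_pos_pos not_le scaleR_matrix_vector_assoc matrix_vector_mul_lid shift_mult_vec)

lemma res_eq: "0 < s \<Longrightarrow> (s *\<^sub>R mat 1 - M) *v res M s y = y"
  by (rule res_solves[OF not_eigenvalue_pos])

lemma res_unique: "0 < s \<Longrightarrow> (s *\<^sub>R mat 1 - M) *v z = y \<Longrightarrow> res M s y = z"
proof -
  assume s: "0 < s" and z: "(s *\<^sub>R mat 1 - M) *v z = y"
  have "(s *\<^sub>R mat 1 - M) *v (res M s y - z) = 0"
    using res_eq[OF s] z by (simp add: matrix_vector_mult_diff_distrib)
  then have "s * ((res M s y - z) \<bullet> (res M s y - z)) \<le> 0"
    using shift_coercive[OF s] by (metis inner_zero_right)
  then have "res M s y - z = 0" using s by (smt (verit) inner_gt_zero_iff mult_pos_pos)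
  then show ?thesis by simp
qed

lemma shift_self_adjoint: "x \<bullet> ((s *\<^sub>R mat 1 - M) *v y) = ((s *\<^sub>R mat 1 - M) *v x) \<bullet> y"
proof -
  have "x \<bullet> (M *v y) = (M *v x) \<bullet> y" using inner_matrix_transpose[of x M y] sym by simp
  then show ?thesis by (simp add: shift_mult_vec inner_diff_right inner_diff_left)
qed

lemma res_self_adjoint: "0 < s \<Longrightarrow> y \<bullet> res M s w = res M s y \<bullet> w"
  by (metis res_eq shift_self_adjoint)

lemma res_norm: "0 < s \<Longrightarrow> s * norm (res M s y) \<le> norm y"
proof -
  assume s: "0 < s"
  let ?z = "res M s y"
  have "s * (?z \<bullet> ?z) \<le> ?z \<bullet> y" using shift_coercive[OF s, of ?z] res_eq[OF s] by simp
  also have "\<dots> \<le> norm ?z * norm y" by (rule norm_cauchy_schwarz)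
  finally have "s * (norm ?z * norm ?z) \<le> norm ?z * norm y"
    by (simp add: dot_square_norm power2_eq_square)
  then show ?thesis
    by (cases "norm ?z = 0") (auto simp: mult.assoc)
qed

lemma res_identity:
  assumes s: "0 < s" and t: "0 < t"
  shows "res M s y - res M t y = (t - s) *\<^sub>R res M s (res M t y)"
proof -
  let ?u = "res M t y" and ?w = "res M s (res M t y)"
  have u: "t *\<^sub>R ?u - M *v ?u = y" using res_eq[OF t, of y] by (simp add: shift_mult_vec)
  have w: "s *\<^sub>R ?w - M *v ?w = ?u" using res_eq[OF s, of ?u] by (simp add: shift_mult_vec)
  have "(s *\<^sub>R mat 1 - M) *v (?u + (t - s) *\<^sub>R ?w)
      = (s *\<^sub>R ?u - M *v ?u) + (t - s) *\<^sub>R (s *\<^sub>R ?w - M *v ?w)"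
    by (simp add: shift_mult_vec matrix_vector_right_distrib matrix_vector_mult_scaleR scaleR_diff_right)
  also have "s *\<^sub>R ?u - M *v ?u = (t *\<^sub>R ?u - M *v ?u) + (s - t) *\<^sub>R ?u"
    by (simp add: algebra_simps)
  also have "(t *\<^sub>R ?u - M *v ?u) + (s - t) *\<^sub>R ?u + (t - s) *\<^sub>R (s *\<^sub>R ?w - M *v ?w) = y"
    unfolding u w by (simp add: algebra_simps)
  finally have "res M s y = ?u + (t - s) *\<^sub>R ?w" by (rule res_unique[OF s])
  then show ?thesis by simp
qed

lemma res_continuous:
  assumes t: "0 < t"
  shows "((\<lambda>s. res M s y) \<longlongrightarrow> res M t y) (at t)"
proof -
  define K where "K = 2 * norm (res M t y) / t"
  have "eventually (\<lambda>s. t/2 < s) (at t)"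
    using t by (intro order_tendstoD(1)[OF tendsto_ident_at]) simp
  then have "eventually (\<lambda>s. norm (res M s y - res M t y) \<le> \<bar>t - s\<bar> * K) (at t)"
  proof eventually_elim
    case (elim s)
    then have s: "0 < s" using t by simp
    have "(t/2) * norm (res M s (res M t y)) \<le> s * norm (res M s (res M t y))"
      using elim by (intro mult_right_mono) auto
    then have "norm (res M s (res M t y)) \<le> K"
      using res_norm[OF s, of "res M t y"] t unfolding K_def by (simp add: field_simps)
    then show ?case
      using res_identity[OF s t] by (simp add: mult_left_mono)
  qed
  moreover have "((\<lambda>s. \<bar>t - s\<bar> * K) \<longlongrightarrow> \<bar>t - t\<bar> * K) (at t)"
    by (intro tendsto_intros)
  ultimately show ?thesis by (subst Lim_null) (rule Lim_null_comparison; simp)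
qed

end

lemma eventually_pos:
  assumes "0 < (t::real)" shows "eventually (\<lambda>s. 0 < s) (at t)"
  using order_tendstoD(1)[OF tendsto_ident_at[of t UNIV] assms] by simp

lemma has_field_derivative_quotient:
  fixes f g :: "real \<Rightarrow> real"
  assumes quot: "eventually (\<lambda>s. f s - f t = (s - t) * g s) (at t)"
    and lim: "(g \<longlongrightarrow> L) (at t)"
  shows "(f has_field_derivative L) (at t)"
  unfolding has_field_derivative_iff
proof (rule Lim_transform_eventually[OF lim])
  have "eventually (\<lambda>s. s \<noteq> t) (at t)" by (simp add: eventually_at_filter)
  with quot show "eventually (\<lambda>s. g s = (f s - f t) / (s - t)) (at t)"
    by eventually_elim simp
qed

context neg_def_sym
begin

lemma transfer_deriv:
  assumes t: "0 < t"
  shows "((\<lambda>s. y \<bullet> res M s y) has_field_derivative -(res M t y \<bullet> res M t y)) (at t)"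
proof (rule has_field_derivative_quotient)
  show "((\<lambda>s. - (res M s y \<bullet> res M t y)) \<longlongrightarrow> -(res M t y \<bullet> res M t y)) (at t)"
    by (intro tendsto_intros res_continuous[OF t])
  show "eventually (\<lambda>s. y \<bullet> res M s y - y \<bullet> res M t y = (s - t) * - (res M s y \<bullet> res M t y)) (at t)"
    using eventually_pos[OF t]
  proof eventually_elim
    case (elim s)
    have "y \<bullet> res M s y - y \<bullet> res M t y = y \<bullet> (res M s y - res M t y)"
      by (simp add: inner_diff_right)
    also have "\<dots> = (t - s) * (res M s y \<bullet> res M t y)"
      using res_identity[OF elim t] res_self_adjoint[OF elim] by simp
    finally show ?case by (simp add: algebra_simps)
  qed
qed

lemma norm_res_deriv:
  assumes t: "0 < t"
  shows "((\<lambda>s. res M s y \<bullet> res M s y)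
          has_field_derivative -(2 * (res M t y \<bullet> res M t (res M t y)))) (at t)"
proof (rule has_field_derivative_quotient)
  have "((\<lambda>s. - (res M s (res M t y) \<bullet> (res M s y + res M t y))) \<longlongrightarrow>
      - (res M t (res M t y) \<bullet> (res M t y + res M t y))) (at t)"
    by (intro tendsto_intros res_continuous[OF t])
  moreover have "res M t (res M t y) \<bullet> (res M t y + res M t y) = 2 * (res M t y \<bullet> res M t (res M t y))"
    by (subst inner_add_right) (simp add: inner_commute)
  ultimately show "((\<lambda>s. - (res M s (res M t y) \<bullet> (res M s y + res M t y))) \<longlongrightarrow>
      -(2 * (res M t y \<bullet> res M t (res M t y)))) (at t)"
    by simp
  show "eventually (\<lambda>s. res M s y \<bullet> res M s y - res M t y \<bullet> res M t y
      = (s - t) * - (res M s (res M t y) \<bullet> (res M s y + res M t y))) (at t)"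
    using eventually_pos[OF t]
  proof eventually_elim
    case (elim s)
    have "res M s y \<bullet> res M s y - res M t y \<bullet> res M t y
        = (res M s y - res M t y) \<bullet> (res M s y + res M t y)"
      by (simp add: inner_simps inner_commute)
    also have "\<dots> = (t - s) * (res M s (res M t y) \<bullet> (res M s y + res M t y))"
      using res_identity[OF elim t] by simp
    finally show ?case by (simp add: algebra_simps)
  qed
qed

lemma transfer_second_deriv:
  assumes t: "0 < t"
  shows "deriv (deriv (\<lambda>s. y \<bullet> res M s y)) t = 2 * (res M t y \<bullet> res M t (res M t y))"
proof -
  have "((\<lambda>s. - (res M s y \<bullet> res M s y))
         has_field_derivative 2 * (res M t y \<bullet> res M t (res M t y))) (at t)"
    using DERIV_minus[OF norm_res_deriv[OF t]] by simp
  then have "(deriv (\<lambda>s. y \<bullet> res M s y)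
      has_field_derivative 2 * (res M t y \<bullet> res M t (res M t y))) (at t)"
    by (rule has_field_derivative_transform_within_open[where S="{0<..}"])
       (use t DERIV_imp_deriv[OF transfer_deriv] in auto)
  then show ?thesis by (rule DERIV_imp_deriv)
qed

lemma compression:
  fixes Q :: "real^'r^'m"
  assumes Q_orth: "transpose Q ** Q = mat 1"
  shows "neg_def_sym (transpose Q ** M ** Q)"
proof
  show "transpose (transpose Q ** M ** Q) = transpose Q ** M ** Q"
    using sym by (simp add: matrix_transpose_mul matrix_mul_assoc)
  have "Q *v x = 0 \<Longrightarrow> x = 0" for x
    using Q_orth by (metis matrix_vector_mul_assoc matrix_vector_mul_lid matrix_vector_mult_0_right)
  moreover have "x \<bullet> ((transpose Q ** M ** Q) *v x) = (Q *v x) \<bullet> (M *v (Q *v x))" for x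
    by (simp add: matrix_vector_mul_assoc[symmetric] dot_lmul_matrix
        inner_commute[of x] inner_commute[of _ "Q *v x"])
  ultimately show "\<forall>x. x \<noteq> 0 \<longrightarrow> x \<bullet> ((transpose Q ** M ** Q) *v x) < 0"
    using neg by metis
qed

end

section \<open>Polynomials applied to a matrix\<close>

definition poly_mv :: "real^'n^'n \<Rightarrow> real poly \<Rightarrow> real^'n \<Rightarrow> real^'n" where
  "poly_mv A p v = (\<Sum>k\<le>degree p. coeff p k *\<^sub>R (((*v) A) ^^ k) v)"

lemma poly_mv_bound: "degree p \<le> N \<Longrightarrow> poly_mv A p v = (\<Sum>k\<le>N. coeff p k *\<^sub>R (((*v) A) ^^ k) v)"
  unfolding poly_mv_def by (rule sum.mono_neutral_left) (auto simp: coeff_eq_0)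

lemma poly_mv_0 [simp]: "poly_mv A 0 v = 0"
  by (simp add: poly_mv_def)

lemma poly_mv_pCons: "poly_mv A (pCons a p) v = a *\<^sub>R v + A *v poly_mv A p v"
proof -
  have "poly_mv A (pCons a p) v = (\<Sum>k\<le>Suc (degree p). coeff (pCons a p) k *\<^sub>R (((*v) A) ^^ k) v)"
    by (rule poly_mv_bound) (rule degree_pCons_le)
  also have "\<dots> = a *\<^sub>R v + (\<Sum>k\<le>degree p. coeff p k *\<^sub>R (((*v) A) ^^ Suc k) v)"
    by (subst sum.atMost_Suc_shift) simp
  also have "(\<Sum>k\<le>degree p. coeff p k *\<^sub>R (((*v) A) ^^ Suc k) v) = A *v poly_mv A p v"
    by (simp add: poly_mv_def mult_vec_sum matrix_vector_mult_scaleR)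
  finally show ?thesis .
qed

lemma poly_mv_add_vec: "poly_mv A p (v + w) = poly_mv A p v + poly_mv A p w"
  by (induct p) (simp_all add: poly_mv_pCons algebra_simps)

lemma poly_mv_scale_vec: "poly_mv A p (c *\<^sub>R v) = c *\<^sub>R poly_mv A p v"
  by (induct p) (simp_all add: poly_mv_pCons algebra_simps)

lemma poly_mv_zero_vec [simp]: "poly_mv A p 0 = 0"
  using poly_mv_scale_vec[of A p 0 0] by simp

lemma poly_mv_sum_vec: "poly_mv A p (\<Sum>j\<in>S. f j) = (\<Sum>j\<in>S. poly_mv A p (f j))"
  by (induct S rule: infinite_finite_induct)
     (auto simp: poly_mv_add_vec)

lemma poly_mv_add: "poly_mv A (p + q) v = poly_mv A p v + poly_mv A q v"
proof -
  let ?N = "degree p + degree q"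
  have "poly_mv A (p + q) v = (\<Sum>k\<le>?N. coeff (p + q) k *\<^sub>R (((*v) A) ^^ k) v)"
    by (rule poly_mv_bound) (meson degree_add_le le_add1 le_add2)
  also have "\<dots> = (\<Sum>k\<le>?N. coeff p k *\<^sub>R (((*v) A) ^^ k) v) + (\<Sum>k\<le>?N. coeff q k *\<^sub>R (((*v) A) ^^ k) v)"
    by (simp add: scaleR_add_left sum.distrib)
  also have "\<dots> = poly_mv A p v + poly_mv A q v"
    by (subst (1 2) poly_mv_bound[symmetric]) auto
  finally show ?thesis .
qed

lemma poly_mv_smult: "poly_mv A (smult c p) v = c *\<^sub>R poly_mv A p v"
proof -
  have "poly_mv A (smult c p) v = (\<Sum>k\<le>degree p. coeff (smult c p) k *\<^sub>R (((*v) A) ^^ k) v)"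
    by (rule poly_mv_bound) (rule degree_smult_le)
  then show ?thesis by (simp add: poly_mv_def scaleR_sum_right)
qed

lemma poly_mv_sum: "poly_mv A (\<Sum>j\<in>S. f j) v = (\<Sum>j\<in>S. poly_mv A (f j) v)"
  by (induct S rule: infinite_finite_induct) (auto simp: poly_mv_add)

lemma poly_mv_diff: "poly_mv A (p - q) v = poly_mv A p v - poly_mv A q v"
  using poly_mv_add[of A "p - q" q v] by simp

lemma poly_mv_mult: "poly_mv A (p * q) v = poly_mv A p (poly_mv A q v)"
proof (induct p)
  case 0 then show ?case by simp
next
  case (pCons a p)
  have "poly_mv A (pCons a p * q) v = poly_mv A (smult a q) v + poly_mv A (pCons 0 (p * q)) v"
    by (simp add: poly_mv_add)
  also have "\<dots> = poly_mv A (pCons a p) (poly_mv A q v)"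
    by (simp add: poly_mv_smult poly_mv_pCons pCons)
  finally show ?case .
qed

text \<open>The linear factor sigma - x acts as the shifted matrix sigma I - A, so multiplying by it
  undoes a resolvent: if (sigma I - A) x = v then (p * (sigma - x))(A) x = p(A) v.\<close>

lemma poly_mv_undo_shift:
  assumes "(\<sigma> *\<^sub>R mat 1 - A) *v x = v"
  shows "poly_mv A (p * [:\<sigma>, -1:]) x = poly_mv A p v"
proof -
  have "poly_mv A [:\<sigma>, -1:] x = v"
    using assms by (simp add: poly_mv_pCons mult_vec_uminus shift_mult_vec)
  then show ?thesis by (simp only: poly_mv_mult)
qed

section \<open>Minimal systems: no nonzero polynomial of degree < n annihilates b\<close>

lemma poly_mv_krylov: "degree p < N \<Longrightarrow> poly_mv A p b = (\<Sum>k<N. coeff p k *\<^sub>R krylov A b k)"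
proof -
  assume d: "degree p < N"
  then obtain M where N: "N = Suc M" by (cases N) auto
  have "poly_mv A p b = (\<Sum>k\<le>M. coeff p k *\<^sub>R krylov A b k)"
    using d N by (subst poly_mv_bound[of p M]) (auto simp: krylov_def)
  then show ?thesis using N lessThan_Suc_atMost by simp
qed

lemma krylov_independent:
  assumes span: "span {krylov A b k | k. k < CARD('n)} = UNIV"
    and sum0: "(\<Sum>k<CARD('n). a k *\<^sub>R krylov A b k) = (0::real^'n)"
    and k: "k < CARD('n)"
  shows "a k = 0"
proof (rule ccontr)
  assume ak: "a k \<noteq> 0"
  let ?n = "CARD('n)"
  let ?S = "krylov A b ` {..<?n}"
  have S: "{krylov A b k | k. k < ?n} = ?S" by auto
  have c1: "card ?S \<le> ?n" using card_image_le[of "{..<?n}" "krylov A b"] by simp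
  have ind: "independent ?S"
    by (rule eucl.card_le_dim_spanning[of ?S UNIV]) (use span S c1 in auto)
  have "dim (UNIV :: (real^'n) set) \<le> card ?S"
    using span S by (metis dim_le_card finite_imageI finite_lessThan subset_UNIV)
  then have "card ?S = card {..<?n}" using c1 by simp
  then have inj: "inj_on (krylov A b) {..<?n}" by (rule eq_card_imp_inj_on[rotated]) simp
  define u where "u v = a (the_inv_into {..<?n} (krylov A b) v)" for v
  have uk: "u (krylov A b j) = a j" if "j < ?n" for j
    unfolding u_def using the_inv_into_f_f[OF inj] that by simp
  have "(\<Sum>v\<in>?S. u v *\<^sub>R v) = (\<Sum>j<?n. u (krylov A b j) *\<^sub>R krylov A b j)"
    by (rule sum.reindex[OF inj, unfolded comp_def])
  also have "\<dots> = 0" using sum0 uk by simp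
  finally have "(\<Sum>v\<in>?S. u v *\<^sub>R v) = 0" .
  moreover have "\<exists>v\<in>?S. u v \<noteq> 0" using uk[OF k] k ak by (metis imageI lessThan_iff)
  ultimately have "dependent ?S" using real_vector.dependent_finite[of ?S] by blast
  then show False using ind by simp
qed

lemma poly_mv_annihilator_zero:
  assumes span: "span {krylov A b k | k. k < CARD('n)} = UNIV"
    and deg: "degree p < CARD('n)" and zero: "poly_mv A p b = (0::real^'n)"
  shows "p = 0"
proof -
  have "coeff p k = 0" if "k < CARD('n)" for k
    by (rule krylov_independent[OF span _ that]) (use poly_mv_krylov[OF deg, of A b] zero in simp)
  then show ?thesis using deg by (metis coeff_eq_0 leading_coeff_0_iff)
qed

section \<open>Nodal polynomials of the shifts and the IRKA basis\<close>

definition node_poly :: "real^'r \<Rightarrow> real poly" where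
  "node_poly s = (\<Prod>k\<in>UNIV. [:s$k, -1:])"

definition omit_node_poly :: "real^'r \<Rightarrow> 'r \<Rightarrow> real poly" where
  "omit_node_poly s j = (\<Prod>k\<in>UNIV - {j}. [:s$k, -1:])"

lemma node_poly_split: "node_poly s = omit_node_poly s j * [:s$j, -1:]"
  unfolding node_poly_def omit_node_poly_def by (subst prod.remove[of _ j]) (auto simp: mult.commute)

lemma degree_omit_node_poly: "degree (omit_node_poly s j) \<le> CARD('r) - 1"
  for s :: "real^'r"
proof -
  have "degree (omit_node_poly s j) \<le> card (UNIV - {j} :: 'r set)"
    using degree_prod_sum_le[of "UNIV - {j}" "\<lambda>k. [:s$k, -1::real:]"]
    by (simp add: omit_node_poly_def)
  then show ?thesis by (simp add: card_Diff_subset)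
qed

lemma poly_omit_node_poly: "poly (omit_node_poly s j) x = (\<Prod>k\<in>UNIV - {j}. s$k - x)"
  by (simp add: omit_node_poly_def poly_prod)

lemma poly_omit_node_poly_other: "k \<noteq> j \<Longrightarrow> poly (omit_node_poly s j) (s$k) = 0"
  unfolding poly_omit_node_poly by (rule prod_zero) auto

lemma poly_omit_node_poly_self: "inj (\<lambda>i. s$i) \<Longrightarrow> poly (omit_node_poly s j) (s$j) \<noteq> 0"
  unfolding poly_omit_node_poly by (auto simp: inj_eq)

lemma irka_V_mult: "irka_V A b s *v c = (\<Sum>j\<in>UNIV. c$j *\<^sub>R res A (s$j) b)"
  by (simp add: vec_eq_iff matrix_vector_mult_def irka_V_def res_def sum_component mult.commute)

lemma irka_V_column: "irka_V A b s *v axis i 1 = res A (s$i) b"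
  for s :: "real^'r"
proof -
  have "(\<Sum>j\<in>UNIV. (axis i 1 :: real^'r)$j *\<^sub>R res A (s$j) b)
      = (\<Sum>j\<in>UNIV. if j = i then res A (s$j) b else 0)"
    by (rule sum.cong) (auto simp: axis_def)
  then show ?thesis by (simp add: irka_V_mult)
qed

text \<open>Multiplying by the nodal polynomial clears all denominators of a vector in range V_r.\<close>

lemma node_poly_on_irka_range:
  assumes not_eig: "\<forall>j. \<not> is_eigenvalue A (s$j)"
  shows "poly_mv A (q * node_poly s) (irka_V A b s *v c)
       = poly_mv A (\<Sum>j\<in>UNIV. smult (c$j) (q * omit_node_poly s j)) b"
proof -
  have col: "poly_mv A (q * node_poly s) (res A (s$j) b) = poly_mv A (q * omit_node_poly s j) b" for j
    unfolding node_poly_split[of s j] mult.assoc[symmetric]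
    by (rule poly_mv_undo_shift[OF res_solves]) (use not_eig in blast)
  show ?thesis
    by (simp add: irka_V_mult poly_mv_sum_vec poly_mv_scale_vec poly_mv_sum poly_mv_smult col)
qed

lemma irka_V_injective:
  fixes A :: "real^'n^'n" and s :: "real^'r"
  assumes span: "span {krylov A b k | k. k < CARD('n)} = UNIV"
    and r_lt_n: "CARD('r) < CARD('n)"
    and distinct_s: "inj (\<lambda>i. s$i)"
    and not_eig: "\<forall>j. \<not> is_eigenvalue A (s$j)"
    and zero: "irka_V A b s *v c = 0"
  shows "c = 0"
proof -
  define P where "P = (\<Sum>j\<in>UNIV. smult (c$j) (omit_node_poly s j))"
  have "poly_mv A P b = poly_mv A (1 * node_poly s) (irka_V A b s *v c)"
    unfolding P_def node_poly_on_irka_range[OF not_eig] by simp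
  then have "poly_mv A P b = 0" using zero by simp
  moreover have "degree P < CARD('n)"
  proof -
    have "degree P \<le> CARD('r) - 1"
      unfolding P_def
      by (rule degree_sum_le) (use degree_omit_node_poly in \<open>auto intro: order.trans[OF degree_smult_le]\<close>)
    then show ?thesis using r_lt_n by linarith
  qed
  ultimately have P0: "P = 0" using poly_mv_annihilator_zero[OF span] by blast
  show "c = 0"
  proof (subst vec_eq_iff, intro allI)
    fix k
    have "poly P (s$k) = (\<Sum>j\<in>UNIV. c$j * poly (omit_node_poly s j) (s$k))"
      unfolding P_def by (simp add: poly_sum)
    also have "\<dots> = c$k * poly (omit_node_poly s k) (s$k)"
      by (subst sum.remove[of _ k]) (auto intro!: sum.neutral simp: poly_omit_node_poly_other)
    finally show "c$k = 0$k" using P0 poly_omit_node_poly_self[OF distinct_s, of k] by simp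
  qed
qed

text \<open>Under the same hypotheses, R(s_i)^2 b does not lie in range V_r: the reduced model
  interpolates H at s_i to first order but not beyond.\<close>

lemma squared_resolvent_not_in_irka_range:
  fixes A :: "real^'n^'n" and s :: "real^'r"
  assumes span: "span {krylov A b k | k. k < CARD('n)} = UNIV"
    and r_lt_n: "CARD('r) < CARD('n)"
    and distinct_s: "inj (\<lambda>i. s$i)"
    and not_eig: "\<forall>j. \<not> is_eigenvalue A (s$j)"
  shows "res A (s$i) (res A (s$i) b) \<notin> range (\<lambda>x. irka_V A b s *v x)"
proof
  let ?L = "[:s$i, -1:]" and ?D = "omit_node_poly s i"
  assume "res A (s$i) (res A (s$i) b) \<in> range (\<lambda>x. irka_V A b s *v x)"
  then obtain c where zc: "res A (s$i) (res A (s$i) b) = irka_V A b s *v c" by auto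
  define P where "P = ?D - (\<Sum>j\<in>UNIV. smult (c$j) (?L * omit_node_poly s j))"
  have solve: "(s$i *\<^sub>R mat 1 - A) *v res A (s$i) y = y" for y
    using res_solves not_eig by blast
  have "poly_mv A (?L * node_poly s) (res A (s$i) (res A (s$i) b))
      = poly_mv A ((?D * ?L) * ?L) (res A (s$i) (res A (s$i) b))"
    by (simp add: node_poly_split[of s i] algebra_simps)
  also have "\<dots> = poly_mv A ?D b"
    by (simp only: poly_mv_undo_shift[OF solve])
  finally have "poly_mv A P b = 0"
    unfolding P_def poly_mv_diff zc node_poly_on_irka_range[OF not_eig] by simp
  moreover have "degree P < CARD('n)"
  proof -
    have "degree (?L * omit_node_poly s j) \<le> CARD('r)" for j
    proof -
      have "degree (?L * omit_node_poly s j) \<le> degree ?L + degree (omit_node_poly s j)"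
        by (rule degree_mult_le)
      moreover have "degree ?L = 1" by simp
      moreover have "0 < CARD('r)" by simp
      ultimately show ?thesis using degree_omit_node_poly[of s j] by linarith
    qed
    then have "degree P \<le> CARD('r)"
      unfolding P_def
      by (intro degree_diff_le) (use degree_omit_node_poly[of s i] in
          \<open>auto intro!: degree_sum_le intro: order.trans[OF degree_smult_le]\<close>)
    then show ?thesis using r_lt_n by linarith
  qed
  ultimately have "P = 0" using poly_mv_annihilator_zero[OF span] by blast
  moreover have "poly P (s$i) = poly ?D (s$i)"
    unfolding P_def by (simp add: poly_sum)
  ultimately show False using poly_omit_node_poly_self[OF distinct_s, of i] by simp
qed

section \<open>Galerkin projections of a negative definite matrix\<close>

text \<open>Every eigenvalue of the Galerkin matrix (V^T V)^-1 V^T A V with injective V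
  is negative when A is negative definite: it is a Rayleigh quotient of A.  At an IRKA
  fixed point this forces all shifts to be positive.\<close>

lemma galerkin_eigenvalue_negative:
  fixes A :: "real^'n^'n" and V :: "real^'r^'n"
  assumes negdef: "\<forall>x. x \<noteq> 0 \<longrightarrow> x \<bullet> (A *v x) < 0"
    and V_inj: "\<And>c. V *v c = 0 \<Longrightarrow> c = 0"
    and eig: "is_eigenvalue (matrix_inv (transpose V ** V) ** (transpose V ** A ** V)) \<mu>"
  shows "\<mu> < 0"
proof -
  define G where "G = transpose V ** V"
  define W where "W = transpose V ** A ** V"
  have G_quad: "x \<bullet> (G *v x) = (V *v x) \<bullet> (V *v x)" for x
    unfolding G_def by (simp add: matrix_vector_mul_assoc[symmetric] dot_lmul_matrix inner_commute[of x])
  have W_quad: "x \<bullet> (W *v x) = (V *v x) \<bullet> (A *v (V *v x))" for x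
    unfolding W_def by (simp add: matrix_vector_mul_assoc[symmetric] dot_lmul_matrix
        inner_commute[of x] inner_commute[of _ "V *v x"])
  have G_inj: "G *v x = 0 \<Longrightarrow> x = 0" for x
    using G_quad V_inj by (metis inner_eq_zero_iff inner_zero_right)
  obtain v where v0: "v \<noteq> 0" and ev: "(matrix_inv G ** W) *v v = \<mu> *\<^sub>R v"
    using eig unfolding is_eigenvalue_def G_def W_def by auto
  have "W *v v = G *v (matrix_inv G *v (W *v v))"
    using matrix_inv_right[OF G_inj] by simp
  also have "\<dots> = \<mu> *\<^sub>R (G *v v)"
    using ev by (simp add: matrix_vector_mul_assoc[symmetric] matrix_vector_mult_scaleR)
  finally have "v \<bullet> (W *v v) = \<mu> * (v \<bullet> (G *v v))" by simp
  moreover have "V *v v \<noteq> 0" using V_inj v0 by blast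
  then have "v \<bullet> (W *v v) < 0" and "0 < v \<bullet> (G *v v)"
    using W_quad G_quad negdef by simp_all
  ultimately show ?thesis by (simp add: mult_less_0_iff)
qed

text \<open>Let Q be orthonormal, M_r = Q^T M Q, b_r = Q^T b, t > 0, and
  suppose R(t) b lies in range Q.  Then R(t)b.R(t)^2 b - R_r(t)b_r.R_r(t)^2 b_r equals
  d.(tI - M) d for d = Q R_r(t)^2 b_r - R(t)^2 b, which is positive as long as
  R(t)^2 b is not in range Q.\<close>

lemma (in neg_def_sym) galerkin_gap:
  fixes Q :: "real^'r^'m"
  assumes Q_orth: "transpose Q ** Q = mat 1" and t: "0 < t"
    and u_in: "res M t b \<in> range (\<lambda>x. Q *v x)"
    and z_out: "res M t (res M t b) \<notin> range (\<lambda>x. Q *v x)"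
  shows "res (transpose Q ** M ** Q) t (transpose Q *v b)
           \<bullet> res (transpose Q ** M ** Q) t (res (transpose Q ** M ** Q) t (transpose Q *v b))
         < res M t b \<bullet> res M t (res M t b)"
proof -
  define Mr where "Mr = transpose Q ** M ** Q"
  interpret R: neg_def_sym Mr unfolding Mr_def by (rule compression[OF Q_orth])
  define u where "u = res M t b"
  define z where "z = res M t u"
  define y where "y = res Mr t (transpose Q *v b)"
  define w where "w = res Mr t y"
  let ?S = "t *\<^sub>R mat 1 - M"
  have QQ: "transpose Q *v (Q *v x) = x" for x
    using Q_orth by (simp add: matrix_vector_mul_assoc)
  have QT: "(Q *v a) \<bullet> c = a \<bullet> (transpose Q *v c)" for a c
    by (metis inner_matrix_transpose transpose_transpose)
  have compress: "(t *\<^sub>R mat 1 - Mr) *v x = transpose Q *v (?S *v (Q *v x))" for x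
  proof -
    have Mr_x: "Mr *v x = transpose Q *v (M *v (Q *v x))"
      by (simp only: Mr_def matrix_vector_mul_assoc matrix_mul_assoc)
    show ?thesis
      by (simp only: shift_mult_vec matrix_vector_mult_diff_distrib matrix_vector_mult_scaleR QQ Mr_x)
  qed
  have Su: "?S *v u = b" and Sz: "?S *v z = u" unfolding u_def z_def by (rule res_eq[OF t])+
  have Sw: "(t *\<^sub>R mat 1 - Mr) *v w = y" unfolding w_def by (rule R.res_eq[OF t])
  \<comment> \<open>Interpolation: the reduced first resolvent lifts to the full one.\<close>
  obtain v where v: "u = Q *v v" using u_in unfolding u_def by auto
  have "y = v"
    unfolding y_def by (rule R.res_unique[OF t]) (simp add: compress Su flip: v)
  then have u_lift: "u = Q *v y" using v by simp
  define d where "d = Q *v w - z"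
  have "(Q *v w) \<bullet> (?S *v (Q *v w)) = w \<bullet> y"
    using QT compress Sw by metis
  moreover have "(Q *v w) \<bullet> (?S *v z) = w \<bullet> y"
    using QT QQ Sz u_lift by metis
  moreover have "z \<bullet> (?S *v (Q *v w)) = w \<bullet> y"
    using shift_self_adjoint Sz u_lift QT QQ inner_commute by metis
  ultimately have gap: "d \<bullet> (?S *v d) = u \<bullet> z - y \<bullet> w"
    using Sz unfolding d_def
    by (simp add: matrix_vector_mult_diff_distrib inner_diff_left inner_diff_right inner_commute)
  have "d \<noteq> 0" using z_out unfolding d_def z_def u_def by (metis eq_iff_diff_eq_0 rangeI)
  then have "0 < t * (d \<bullet> d)" using t by simp
  also have "\<dots> \<le> d \<bullet> (?S *v d)" by (rule shift_coercive[OF t])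
  finally show ?thesis
    using gap unfolding u_def z_def y_def w_def Mr_def by simp
qed

lemma pos_def_diag_mat:
  assumes pos: "\<And>i. 0 < e$i"
  shows "pos_def (diag_mat e)"
  unfolding pos_def_def
proof (intro allI impI)
  fix x :: "real^'a" assume "x \<noteq> 0"
  then obtain k where k: "x$k \<noteq> 0" by (metis vec_eq_iff zero_index)
  have "(\<Sum>j\<in>UNIV. (if i = j then e$i else 0) * x$j) = e$i * x$i" for i
  proof -
    have "(\<Sum>j\<in>UNIV. (if i = j then e$i else 0) * x$j) = (\<Sum>j\<in>UNIV. if i = j then e$i * x$j else 0)"
      by (rule sum.cong) auto
    then show ?thesis by simp
  qed
  then have "diag_mat e *v x = (\<chi> i. e$i * x$i)"
    by (simp add: vec_eq_iff matrix_vector_mult_def diag_mat_def)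
  then have "x \<bullet> (diag_mat e *v x) = (\<Sum>i\<in>UNIV. e$i * (x$i)\<^sup>2)"
    by (simp add: inner_vec_def power2_eq_square mult.commute mult.left_commute)
  also have "\<dots> > 0"
    by (rule sum_pos2[of _ k]) (use pos k in \<open>auto intro!: mult_nonneg_nonneg less_imp_le[OF pos]\<close>)
  finally show "x \<bullet> (diag_mat e *v x) > 0" .
qed

theorem lemma4:
  fixes A :: "real^'n^'n" and b :: "real^'n" and s :: "real^'r"
    and Q :: "real^'r^'n"
  assumes symA: "transpose A = A"
    and negdef: "\<forall>x. x \<noteq> 0 \<longrightarrow> x \<bullet> (A *v x) < 0"
    and minimal: "minimal_sss A b"
    and r_lt_n: "CARD('r) < CARD('n)"
    and distinct_s: "inj (\<lambda>i. s$i)"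
    and not_eig: "\<forall>i. \<not> is_eigenvalue A (s$i)"
    and fixed_point: "{mu. is_eigenvalue (irka_Ar A b s) mu} = {- s$i | i. True}"
    and Q_orth: "transpose Q ** Q = mat 1"
    and Q_range: "range (\<lambda>x. Q *v x) = range (\<lambda>x. irka_V A b s *v x)"
  shows "pos_def (diag_mat (\<chi> i.
            deriv (deriv (transfer A b b)) (s$i)
          - deriv (deriv (transfer (transpose Q ** A ** Q) (transpose Q *v b) (transpose Q *v b))) (s$i)))"
proof -
  interpret full: neg_def_sym A using symA negdef by unfold_locales
  interpret reduced: neg_def_sym "transpose Q ** A ** Q" by (rule full.compression[OF Q_orth])
  have span: "span {krylov A b k | k. k < CARD('n)} = UNIV"
    using minimal unfolding minimal_sss_def by blast
  note V_inj = irka_V_injective[OF span r_lt_n distinct_s not_eig]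
  have s_pos: "0 < s$i" for i
  proof -
    have "is_eigenvalue (irka_Ar A b s) (- s$i)" using fixed_point by auto
    then have "- s$i < 0"
      unfolding irka_Ar_def Let_def using galerkin_eigenvalue_negative[OF negdef] V_inj by blast
    then show ?thesis by simp
  qed
  have gap: "res (transpose Q ** A ** Q) (s$i) (transpose Q *v b)
        \<bullet> res (transpose Q ** A ** Q) (s$i) (res (transpose Q ** A ** Q) (s$i) (transpose Q *v b))
      < res A (s$i) b \<bullet> res A (s$i) (res A (s$i) b)" for i
  proof (rule full.galerkin_gap[OF Q_orth s_pos])
    show "res A (s$i) b \<in> range (\<lambda>x. Q *v x)"
      unfolding Q_range by (metis irka_V_column rangeI)
    show "res A (s$i) (res A (s$i) b) \<notin> range (\<lambda>x. Q *v x)"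
      unfolding Q_range by (rule squared_resolvent_not_in_irka_range[OF span r_lt_n distinct_s not_eig])
  qed
  show ?thesis
    unfolding transfer_res
    by (rule pos_def_diag_mat)
       (use gap in \<open>simp add: full.transfer_second_deriv reduced.transfer_second_deriv s_pos\<close>)
qed

end
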